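(* Let $n \ge 1$, let $F$ be an $n$-perturbation on $H^2(\mathbb{D})$ and $S_n = M_z + F$. If $f \in H^2(\mathbb{D})$ is a nonzero function, then the closed subspace $[f]_{S_n} = \overline{\{p(S_n) f : p \in \mathbb{C}[z]\}}$ contains a nonzero closed $M_z$-invariant subspace of $H^2(\mathbb{D})$.
   Context: $H^2(\mathbb{D})$ is the Hardy space on the open unit disc and $M_z$ the unilateral shift on it. All operators are bounded. A linear operator $F$ on $H^2(\mathbb{D})$ is an $n$-perturbation if (a) $Fz^m = 0$ for all $m \ge n$; (b) $F(z^m H^2(\mathbb{D})) \subseteq z^{m+1}\mathbb{C}[z]$ for all $m \ge 0$; and (c) $M_z + F$ is left-invertible. *)

theory Defs
  imports "HOL-Analysis.Analysis" "HOL-Computational_Algebra.Polynomial"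
begin

text \<open>The Hardy space H^2(D) is modelled through Taylor coefficients:
  f(z) = sum a_k z^k corresponds to the coefficient sequence a :: nat => complex,
  and f is in H^2 iff sum |a_k|^2 < infinity; the H^2 norm is the l^2 norm of a.\<close>

type_synonym seq = "nat \<Rightarrow> complex"
type_synonym op = "seq \<Rightarrow> seq"

definition H2 :: "seq set" where
  "H2 = {a. summable (\<lambda>k. (cmod (a k))\<^sup>2)}"

definition h2_norm :: "seq \<Rightarrow> real" where
  "h2_norm a = sqrt (\<Sum>k. (cmod (a k))\<^sup>2)"

definition sadd :: "seq \<Rightarrow> seq \<Rightarrow> seq" where
  "sadd a b = (\<lambda>k. a k + b k)"

definition ssub :: "seq \<Rightarrow> seq \<Rightarrow> seq" where
  "ssub a b = (\<lambda>k. a k - b k)"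

definition sscale :: "complex \<Rightarrow> seq \<Rightarrow> seq" where
  "sscale c a = (\<lambda>k. c * a k)"

definition bounded_op :: "op \<Rightarrow> bool" where
  "bounded_op T \<longleftrightarrow>
     (\<forall>a\<in>H2. T a \<in> H2) \<and>
     (\<forall>a\<in>H2. \<forall>b\<in>H2. T (sadd a b) = sadd (T a) (T b)) \<and>
     (\<forall>a\<in>H2. \<forall>c. T (sscale c a) = sscale c (T a)) \<and>
     (\<exists>K. \<forall>a\<in>H2. h2_norm (T a) \<le> K * h2_norm a)"

definition left_invertible :: "op \<Rightarrow> bool" where
  "left_invertible T \<longleftrightarrow> (\<exists>L. bounded_op L \<and> (\<forall>a\<in>H2. L (T a) = a))"

definition zpow :: "nat \<Rightarrow> seq" where
  "zpow m = (\<lambda>k. if k = m then 1 else 0)"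

definition Mz :: op where
  "Mz a = (\<lambda>k. if k = 0 then 0 else a (k - 1))"

definition op_add :: "op \<Rightarrow> op \<Rightarrow> op" where
  "op_add S T = (\<lambda>a. sadd (S a) (T a))"

definition zpowH2 :: "nat \<Rightarrow> seq set" where
  "zpowH2 m = {a \<in> H2. \<forall>k<m. a k = 0}"

definition zpow_poly :: "nat \<Rightarrow> seq set" where
  "zpow_poly m = {a. (\<exists>N. \<forall>k\<ge>N. a k = 0) \<and> (\<forall>k<m. a k = 0)}"

definition n_perturbation :: "nat \<Rightarrow> op \<Rightarrow> bool" where
  "n_perturbation n F \<longleftrightarrow>
     bounded_op F \<and>
     (\<forall>m\<ge>n. F (zpow m) = (\<lambda>_. 0)) \<and>
     (\<forall>m. F ` zpowH2 m \<subseteq> zpow_poly (Suc m)) \<and>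
     left_invertible (op_add Mz F)"

definition poly_op :: "complex poly \<Rightarrow> op \<Rightarrow> seq \<Rightarrow> seq" where
  "poly_op p T f = (\<lambda>k. \<Sum>i\<le>degree p. coeff p i * (T ^^ i) f k)"

definition h2_closure :: "seq set \<Rightarrow> seq set" where
  "h2_closure A = {a \<in> H2. \<forall>e>0. \<exists>b\<in>A. h2_norm (ssub a b) < e}"

definition cyclic_subspace :: "op \<Rightarrow> seq \<Rightarrow> seq set" where
  "cyclic_subspace T f = h2_closure {poly_op p T f | p. True}"

definition closed_subspace :: "seq set \<Rightarrow> bool" where
  "closed_subspace M \<longleftrightarrow> M \<subseteq> H2 \<and> (\<lambda>_. 0) \<in> M \<and>
     (\<forall>a\<in>M. \<forall>b\<in>M. sadd a b \<in> M) \<and> (\<forall>a\<in>M. \<forall>c. sscale c a \<in> M) \<and>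
     h2_closure M \<subseteq> M"

end

theory Submission
  imports Defs
begin

text \<open>
  Write S = M_z + F. Since S maps z^m H^2 into z^(m+1) H^2 and is injective (being
  left-invertible), g = S^n f is a nonzero element of z^n H^2. A bounded operator that
  kills every z^m with m \<ge> n kills all of z^n H^2, so S agrees with M_z on the
  M_z-invariant space z^n H^2. Hence the M_z-cyclic subspace generated by g, which is a
  nonzero closed M_z-invariant subspace, equals the S-cyclic subspace generated by
  g = S^n f, and this lies inside the S-cyclic subspace generated by f.
\<close>

lemma H2_zero: "(\<lambda>_. 0) \<in> H2"
  by (simp add: H2_def)

lemma H2_if_norm_le:
  assumes "a \<in> H2" and "\<And>k. cmod (b k) \<le> cmod (a k)"
  shows "b \<in> H2"
proof -
  have "summable (\<lambda>k. (cmod (a k))\<^sup>2)"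
    using assms(1) by (simp add: H2_def)
  moreover have "(cmod (b k))\<^sup>2 \<le> (cmod (a k))\<^sup>2" for k
    using assms(2)[of k] by (simp add: power_mono)
  ultimately show ?thesis
    unfolding H2_def by (auto intro: summable_comparison_test'[where N = 0])
qed

lemma H2_sadd:
  assumes "a \<in> H2" and "b \<in> H2"
  shows "sadd a b \<in> H2"
proof -
  have "summable (\<lambda>k. 2 * (cmod (a k))\<^sup>2 + 2 * (cmod (b k))\<^sup>2)"
    using assms by (auto simp: H2_def intro: summable_add summable_mult)
  moreover have "(cmod (a k + b k))\<^sup>2 \<le> 2 * (cmod (a k))\<^sup>2 + 2 * (cmod (b k))\<^sup>2" for k
  proof -
    have "(cmod (a k + b k))\<^sup>2 \<le> (cmod (a k) + cmod (b k))\<^sup>2"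
      by (simp add: power_mono norm_triangle_ineq)
    also have "\<dots> \<le> 2 * (cmod (a k))\<^sup>2 + 2 * (cmod (b k))\<^sup>2"
      by (smt (verit) sum_squares_bound power2_sum)
    finally show ?thesis .
  qed
  ultimately show ?thesis
    unfolding H2_def sadd_def by (auto intro: summable_comparison_test'[where N = 0])
qed

lemma H2_sscale: "a \<in> H2 \<Longrightarrow> sscale c a \<in> H2"
  by (auto simp: H2_def sscale_def norm_mult power_mult_distrib intro: summable_mult)

lemma ssub_eq_sadd_sscale: "ssub a b = sadd a (sscale (-1) b)"
  by (simp add: ssub_def sadd_def sscale_def)

lemma H2_ssub: "a \<in> H2 \<Longrightarrow> b \<in> H2 \<Longrightarrow> ssub a b \<in> H2"
  by (simp add: ssub_eq_sadd_sscale H2_sadd H2_sscale)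

lemma h2_norm_nonneg: "a \<in> H2 \<Longrightarrow> h2_norm a \<ge> 0"
  unfolding h2_norm_def H2_def by (simp add: suminf_nonneg)

lemma h2_norm_zero: "h2_norm (\<lambda>_. 0) = 0"
  by (simp add: h2_norm_def)

lemma h2_norm_eq_0_imp:
  assumes "a \<in> H2" and "h2_norm a = 0"
  shows "a = (\<lambda>_. 0)"
proof -
  have "summable (\<lambda>k. (cmod (a k))\<^sup>2)" and "(\<Sum>k. (cmod (a k))\<^sup>2) = 0"
    using assms unfolding H2_def h2_norm_def by (simp_all add: suminf_nonneg)
  then have "\<forall>k. (cmod (a k))\<^sup>2 = 0"
    using suminf_eq_zero_iff[of "\<lambda>k. (cmod (a k))\<^sup>2"] by simp
  then show ?thesis
    by auto
qed

lemma L2_set_lessThan_le_h2_norm: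
  assumes "a \<in> H2"
  shows "L2_set (\<lambda>k. cmod (a k)) {..<N} \<le> h2_norm a"
proof -
  have "(\<Sum>k<N. (cmod (a k))\<^sup>2) \<le> (\<Sum>k. (cmod (a k))\<^sup>2)"
    using assms by (intro sum_le_suminf) (auto simp: H2_def)
  then show ?thesis
    unfolding L2_set_def h2_norm_def by simp
qed

lemma h2_norm_triangle:
  assumes "a \<in> H2" and "b \<in> H2"
  shows "h2_norm (sadd a b) \<le> h2_norm a + h2_norm b"
proof -
  let ?c = "\<lambda>k. cmod (a k + b k)"
  have "(\<Sum>k<N. (?c k)\<^sup>2) \<le> (h2_norm a + h2_norm b)\<^sup>2" for N
  proof -
    have "L2_set ?c {..<N} \<le> L2_set (\<lambda>k. cmod (a k) + cmod (b k)) {..<N}"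
      by (rule L2_set_mono) (auto simp: norm_triangle_ineq)
    also have "\<dots> \<le> L2_set (\<lambda>k. cmod (a k)) {..<N} + L2_set (\<lambda>k. cmod (b k)) {..<N}"
      by (rule L2_set_triangle_ineq)
    also have "\<dots> \<le> h2_norm a + h2_norm b"
      using assms by (intro add_mono L2_set_lessThan_le_h2_norm)
    finally have "(L2_set ?c {..<N})\<^sup>2 \<le> (h2_norm a + h2_norm b)\<^sup>2"
      by (simp add: power_mono L2_set_nonneg)
    then show ?thesis
      by (simp add: L2_set_def sum_nonneg)
  qed
  then have "(\<Sum>k. (?c k)\<^sup>2) \<le> (h2_norm a + h2_norm b)\<^sup>2"
    using H2_sadd[OF assms] by (intro suminf_le_const) (auto simp: H2_def sadd_def)
  then show ?thesis
    using h2_norm_nonneg[OF assms(1)] h2_norm_nonneg[OF assms(2)]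
    by (simp add: h2_norm_def sadd_def real_le_lsqrt)
qed

lemma h2_norm_sscale:
  assumes "a \<in> H2"
  shows "h2_norm (sscale c a) = cmod c * h2_norm a"
proof -
  have "(\<Sum>k. (cmod (c * a k))\<^sup>2) = (cmod c)\<^sup>2 * (\<Sum>k. (cmod (a k))\<^sup>2)"
    using assms suminf_mult[of "\<lambda>k. (cmod (a k))\<^sup>2" "(cmod c)\<^sup>2"]
    by (simp add: H2_def norm_mult power_mult_distrib)
  then show ?thesis
    unfolding h2_norm_def sscale_def by (simp add: real_sqrt_mult)
qed

lemma h2_norm_ssub_triangle:
  assumes "a \<in> H2" and "b \<in> H2" and "c \<in> H2"
  shows "h2_norm (ssub a c) \<le> h2_norm (ssub a b) + h2_norm (ssub b c)"
proof -
  have "ssub a c = sadd (ssub a b) (ssub b c)"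
    by (simp add: ssub_def sadd_def)
  then show ?thesis
    using h2_norm_triangle[OF H2_ssub[OF assms(1,2)] H2_ssub[OF assms(2,3)]] by simp
qed

lemma h2_norm_tail_tendsto_0:
  assumes "a \<in> H2"
  shows "(\<lambda>N. h2_norm (\<lambda>k. if k < N then 0 else a k)) \<longlonglongrightarrow> 0"
proof -
  have s: "summable (\<lambda>k. (cmod (a k))\<^sup>2)"
    using assms by (simp add: H2_def)
  have "h2_norm (\<lambda>k. if k < N then 0 else a k) = sqrt (\<Sum>k. (cmod (a (k + N)))\<^sup>2)" for N
  proof -
    let ?y = "\<lambda>k. if k < N then 0 else (cmod (a k))\<^sup>2"
    have "summable ?y"
      by (rule summable_comparison_test[OF _ s]) auto
    then have "suminf ?y = (\<Sum>k. (cmod (a (k + N)))\<^sup>2)"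
      using suminf_split_initial_segment[of ?y N] by simp
    moreover have "(\<lambda>k. (cmod (if k < N then 0 else a k))\<^sup>2) = ?y"
      by auto
    ultimately show ?thesis
      unfolding h2_norm_def by simp
  qed
  moreover have "(\<lambda>N. sqrt (\<Sum>k. (cmod (a (k + N)))\<^sup>2)) \<longlonglongrightarrow> sqrt 0"
    by (intro tendsto_real_sqrt suminf_exist_split2 s)
  ultimately show ?thesis
    by simp
qed

lemma zpow_H2: "zpow m \<in> H2"
proof -
  have "(\<lambda>k. (cmod (zpow m k))\<^sup>2) = (\<lambda>k. if k = m then 1 else 0)"
    by (auto simp: zpow_def)
  moreover have "summable (\<lambda>k::nat. if k = m then (1::real) else 0)"
    using sums_single[of m "\<lambda>_. 1 :: real"] by (auto simp: summable_def)
  ultimately show ?thesis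
    by (simp add: H2_def)
qed

lemma H2_Mz: "a \<in> H2 \<Longrightarrow> Mz a \<in> H2"
  and h2_norm_Mz: "a \<in> H2 \<Longrightarrow> h2_norm (Mz a) = h2_norm a"
proof -
  assume "a \<in> H2"
  let ?g = "\<lambda>k. (cmod (Mz a k))\<^sup>2"
  have shift: "(\<lambda>k. ?g (Suc k)) = (\<lambda>k. (cmod (a k))\<^sup>2)"
    by (simp add: Mz_def)
  then have "summable ?g"
    using \<open>a \<in> H2\<close> summable_Suc_iff[of ?g] by (simp add: H2_def)
  then show "Mz a \<in> H2"
    by (simp add: H2_def)
  show "h2_norm (Mz a) = h2_norm a"
    using suminf_split_head[OF \<open>summable ?g\<close>] shift by (simp add: h2_norm_def Mz_def)
qed

lemma Mz_zpowH2: "a \<in> zpowH2 m \<Longrightarrow> Mz a \<in> zpowH2 (Suc m)"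
  unfolding zpowH2_def using H2_Mz[of a] by (auto simp: Mz_def)

lemma zpowH2_Suc_subset: "zpowH2 (Suc m) \<subseteq> zpowH2 m"
  by (auto simp: zpowH2_def)

lemma bounded_opD:
  assumes "bounded_op T"
  shows bounded_op_H2: "a \<in> H2 \<Longrightarrow> T a \<in> H2"
    and bounded_op_sadd: "a \<in> H2 \<Longrightarrow> b \<in> H2 \<Longrightarrow> T (sadd a b) = sadd (T a) (T b)"
    and bounded_op_sscale: "a \<in> H2 \<Longrightarrow> T (sscale c a) = sscale c (T a)"
  using assms by (auto simp: bounded_op_def)

lemma bounded_op_bound_pos:
  assumes "bounded_op T"
  obtains K where "K > 0" and "\<And>a. a \<in> H2 \<Longrightarrow> h2_norm (T a) \<le> K * h2_norm a"
proof -
  obtain K where K: "\<And>a. a \<in> H2 \<Longrightarrow> h2_norm (T a) \<le> K * h2_norm a"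
    using assms unfolding bounded_op_def by blast
  have "h2_norm (T a) \<le> (\<bar>K\<bar> + 1) * h2_norm a" if "a \<in> H2" for a
  proof -
    have "K * h2_norm a \<le> (\<bar>K\<bar> + 1) * h2_norm a"
      using h2_norm_nonneg[OF that] by (intro mult_right_mono) auto
    then show ?thesis
      using K[OF that] by linarith
  qed
  then show thesis
    by (intro that[of "\<bar>K\<bar> + 1"]) auto
qed

lemma bounded_op_zero: "bounded_op T \<Longrightarrow> T (\<lambda>_. 0) = (\<lambda>_. 0)"
  using bounded_op_sscale[of T "\<lambda>_. 0" 0] by (simp add: H2_zero sscale_def)

lemma bounded_op_ssub:
  "bounded_op T \<Longrightarrow> a \<in> H2 \<Longrightarrow> b \<in> H2 \<Longrightarrow> T (ssub a b) = ssub (T a) (T b)"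
  by (simp add: ssub_eq_sadd_sscale bounded_op_sadd bounded_op_sscale H2_sscale)

lemma bounded_op_Mz: "bounded_op Mz"
  unfolding bounded_op_def
  by (auto simp: H2_Mz h2_norm_Mz intro!: exI[of _ 1]) (auto simp: Mz_def sadd_def sscale_def)

lemma sscale_bounded_op: "bounded_op (sscale c)"
  unfolding bounded_op_def
  by (auto simp: H2_sscale h2_norm_sscale intro!: exI[of _ "cmod c"])
    (auto simp: sadd_def sscale_def algebra_simps)

lemma H2_funpow: "bounded_op T \<Longrightarrow> a \<in> H2 \<Longrightarrow> (T ^^ i) a \<in> H2"
  by (induction i) (simp_all add: bounded_op_H2)

lemma H2_lincomb:
  assumes "\<And>i. h i \<in> H2"
  shows "(\<lambda>k. \<Sum>i\<le>(N::nat). c i * h i k) \<in> H2"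
proof (induction N)
  case 0
  show ?case
    using H2_sscale[OF assms[of 0], of "c 0"] by (simp add: sscale_def)
next
  case (Suc N)
  have "(\<lambda>k. \<Sum>i\<le>Suc N. c i * h i k)
        = sadd (\<lambda>k. \<Sum>i\<le>N. c i * h i k) (sscale (c (Suc N)) (h (Suc N)))"
    by (simp add: sadd_def sscale_def)
  then show ?case
    using H2_sadd[OF Suc H2_sscale[OF assms]] by simp
qed

lemma bounded_op_lincomb:
  assumes "bounded_op T" and "\<And>i. h i \<in> H2"
  shows "T (\<lambda>k. \<Sum>i\<le>(N::nat). c i * h i k) = (\<lambda>k. \<Sum>i\<le>N. c i * T (h i) k)"
proof (induction N)
  case 0
  show ?case
    using bounded_op_sscale[OF assms(1) assms(2)[of 0], of "c 0"] by (simp add: sscale_def)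
next
  case (Suc N)
  have "(\<lambda>k. \<Sum>i\<le>Suc N. c i * h i k)
        = sadd (\<lambda>k. \<Sum>i\<le>N. c i * h i k) (sscale (c (Suc N)) (h (Suc N)))"
    by (simp add: sadd_def sscale_def)
  then show ?case
    using Suc assms
    by (simp add: bounded_op_sadd bounded_op_sscale H2_lincomb H2_sscale)
      (simp add: sadd_def sscale_def)
qed

lemma bounded_op_truncation_eq_0:
  assumes "bounded_op F" and "\<forall>m\<ge>n. F (zpow m) = (\<lambda>_. 0)"
    and "a \<in> zpowH2 n" and "n \<le> N"
  shows "F (\<lambda>k. if k < N then a k else 0) = (\<lambda>_. 0)"
  using \<open>n \<le> N\<close>
proof (induction N rule: dec_induct)
  case base
  have "(\<lambda>k. if k < n then a k else 0) = (\<lambda>_. 0)"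
    using \<open>a \<in> zpowH2 n\<close> by (auto simp: zpowH2_def)
  then show ?case
    using bounded_op_zero[OF assms(1)] by simp
next
  case (step N)
  let ?t = "\<lambda>N k. if k < N then a k else 0"
  have "a \<in> H2"
    using assms(3) by (simp add: zpowH2_def)
  then have "?t N \<in> H2"
    by (rule H2_if_norm_le) simp
  moreover have "?t (Suc N) = sadd (?t N) (sscale (a N) (zpow N))"
    by (auto simp: sadd_def sscale_def zpow_def less_Suc_eq)
  ultimately have "F (?t (Suc N)) = sadd (F (?t N)) (sscale (a N) (F (zpow N)))"
    using assms(1) by (simp add: bounded_op_sadd bounded_op_sscale H2_sscale zpow_H2)
  then show ?case
    using step assms(2) by (simp add: sadd_def sscale_def)
qed

text \<open>By continuity: F kills the truncations of a, and these converge to a.\<close>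

lemma bounded_op_eq_0_on_zpowH2:
  assumes "bounded_op F" and "\<forall>m\<ge>n. F (zpow m) = (\<lambda>_. 0)" and "a \<in> zpowH2 n"
  shows "F a = (\<lambda>_. 0)"
proof -
  obtain K where K: "\<And>b. b \<in> H2 \<Longrightarrow> h2_norm (F b) \<le> K * h2_norm b"
    using bounded_op_bound_pos[OF assms(1)] by blast
  define t where "t N = (\<lambda>k. if k < N then a k else 0)" for N
  define r where "r N = (\<lambda>k. if k < N then 0 else a k)" for N
  have aH: "a \<in> H2"
    using assms(3) by (simp add: zpowH2_def)
  have tH: "t N \<in> H2" and rH: "r N \<in> H2" for N
    by (rule H2_if_norm_le[OF aH], simp add: t_def r_def)+
  have "F a = F (r N)" if "n \<le> N" for N
  proof -
    have "a = sadd (t N) (r N)"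
      by (auto simp: t_def r_def sadd_def)
    then have "F a = sadd (F (t N)) (F (r N))"
      using bounded_op_sadd[OF assms(1) tH rH] by simp
    then show ?thesis
      using bounded_op_truncation_eq_0[OF assms that] by (simp add: t_def sadd_def)
  qed
  then have "\<forall>N\<ge>n. h2_norm (F a) \<le> K * h2_norm (r N)"
    using K[OF rH] by auto
  moreover have "(\<lambda>N. K * h2_norm (r N)) \<longlonglongrightarrow> 0"
    using tendsto_mult_right_zero[OF h2_norm_tail_tendsto_0[OF aH], of K] by (simp add: r_def)
  ultimately have "h2_norm (F a) \<le> 0"
    by (intro LIMSEQ_le_const[of _ 0]) auto
  moreover have "F a \<in> H2"
    using bounded_op_H2[OF assms(1) aH] .
  ultimately show ?thesis
    using h2_norm_nonneg[of "F a"] h2_norm_eq_0_imp[of "F a"] by simp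
qed

lemma h2_closureI:
  "a \<in> H2 \<Longrightarrow> (\<And>e. e > 0 \<Longrightarrow> \<exists>b\<in>A. h2_norm (ssub a b) < e) \<Longrightarrow> a \<in> h2_closure A"
  unfolding h2_closure_def by blast

lemma h2_closureD:
  "a \<in> h2_closure A \<Longrightarrow> e > 0 \<Longrightarrow> \<exists>b\<in>A. h2_norm (ssub a b) < e"
  unfolding h2_closure_def by blast

lemma h2_closure_subset_H2: "h2_closure A \<subseteq> H2"
  unfolding h2_closure_def by blast

lemma h2_closure_superset: "A \<subseteq> H2 \<Longrightarrow> A \<subseteq> h2_closure A"
  unfolding h2_closure_def by (force simp: ssub_def h2_norm_zero)

lemma h2_closure_mono: "A \<subseteq> B \<Longrightarrow> h2_closure A \<subseteq> h2_closure B"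
  unfolding h2_closure_def by blast

lemma h2_closure_idem:
  assumes "A \<subseteq> H2"
  shows "h2_closure (h2_closure A) \<subseteq> h2_closure A"
proof
  fix a
  assume a: "a \<in> h2_closure (h2_closure A)"
  then have aH: "a \<in> H2"
    using h2_closure_subset_H2 by blast
  show "a \<in> h2_closure A"
  proof (rule h2_closureI[OF aH])
    fix e :: real
    assume "e > 0"
    then have e2: "e / 2 > 0"
      by simp
    obtain b where b: "b \<in> h2_closure A" "h2_norm (ssub a b) < e / 2"
      using h2_closureD[OF a e2] by blast
    obtain c where c: "c \<in> A" "h2_norm (ssub b c) < e / 2"
      using h2_closureD[OF b(1) e2] by blast
    have "b \<in> H2" and "c \<in> H2"
      using b(1) c(1) h2_closure_subset_H2 assms by blast+
    then have "h2_norm (ssub a c) < e"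
      using h2_norm_ssub_triangle[OF aH] b(2) c(2) by fastforce
    then show "\<exists>c\<in>A. h2_norm (ssub a c) < e"
      using c by blast
  qed
qed

lemma h2_closure_sadd:
  assumes "A \<subseteq> H2" and "\<forall>a\<in>A. \<forall>b\<in>A. sadd a b \<in> A"
    and a: "a \<in> h2_closure A" and b: "b \<in> h2_closure A"
  shows "sadd a b \<in> h2_closure A"
proof -
  have aH: "a \<in> H2" and bH: "b \<in> H2"
    using a b h2_closure_subset_H2 by blast+
  show ?thesis
  proof (rule h2_closureI[OF H2_sadd[OF aH bH]])
    fix e :: real
    assume "e > 0"
    then have e2: "e / 2 > 0"
      by simp
    obtain a' where a': "a' \<in> A" "h2_norm (ssub a a') < e / 2"
      using h2_closureD[OF a e2] by blast
    obtain b' where b': "b' \<in> A" "h2_norm (ssub b b') < e / 2"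
      using h2_closureD[OF b e2] by blast
    have a'H: "a' \<in> H2" and b'H: "b' \<in> H2"
      using a'(1) b'(1) assms(1) by blast+
    have "ssub (sadd a b) (sadd a' b') = sadd (ssub a a') (ssub b b')"
      by (auto simp: ssub_def sadd_def)
    then have "h2_norm (ssub (sadd a b) (sadd a' b')) < e"
      using h2_norm_triangle[OF H2_ssub[OF aH a'H] H2_ssub[OF bH b'H]] a'(2) b'(2) by simp
    then show "\<exists>c\<in>A. h2_norm (ssub (sadd a b) c) < e"
      using assms(2) a'(1) b'(1) by blast
  qed
qed

lemma bounded_op_image_h2_closure:
  assumes "bounded_op T" and "A \<subseteq> H2" and "T ` A \<subseteq> A"
  shows "T ` h2_closure A \<subseteq> h2_closure A"
proof clarify
  fix a
  assume a: "a \<in> h2_closure A"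
  then have aH: "a \<in> H2"
    using h2_closure_subset_H2 by blast
  obtain K where "K > 0" and K: "\<And>b. b \<in> H2 \<Longrightarrow> h2_norm (T b) \<le> K * h2_norm b"
    using bounded_op_bound_pos[OF assms(1)] by blast
  show "T a \<in> h2_closure A"
  proof (rule h2_closureI[OF bounded_op_H2[OF assms(1) aH]])
    fix e :: real
    assume "e > 0"
    then obtain a' where a': "a' \<in> A" "h2_norm (ssub a a') < e / K"
      using h2_closureD[OF a, of "e / K"] \<open>K > 0\<close> by auto
    then have dH: "ssub a a' \<in> H2"
      using aH assms(2) H2_ssub by blast
    have "h2_norm (ssub (T a) (T a')) = h2_norm (T (ssub a a'))"
      using bounded_op_ssub[OF assms(1) aH] a'(1) assms(2) by auto
    also have "\<dots> \<le> K * h2_norm (ssub a a')"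
      by (rule K[OF dH])
    also have "\<dots> < e"
      using a'(2) \<open>K > 0\<close> by (simp add: pos_less_divide_eq mult.commute)
    finally show "\<exists>b\<in>A. h2_norm (ssub (T a) b) < e"
      using a'(1) assms(3) by blast
  qed
qed

lemma closed_subspace_h2_closure:
  assumes "A \<subseteq> H2" and "(\<lambda>_. 0) \<in> A"
    and "\<forall>a\<in>A. \<forall>b\<in>A. sadd a b \<in> A" and "\<forall>a\<in>A. \<forall>c. sscale c a \<in> A"
  shows "closed_subspace (h2_closure A)"
  unfolding closed_subspace_def
proof (intro conjI ballI allI)
  show "h2_closure A \<subseteq> H2"
    by (rule h2_closure_subset_H2)
  show "(\<lambda>_. 0) \<in> h2_closure A"
    using h2_closure_superset[OF assms(1)] assms(2) by blast
  show "sadd a b \<in> h2_closure A" if "a \<in> h2_closure A" "b \<in> h2_closure A" for a b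
    by (rule h2_closure_sadd[OF assms(1,3) that])
  show "sscale c a \<in> h2_closure A" if "a \<in> h2_closure A" for a c
    using bounded_op_image_h2_closure[OF sscale_bounded_op assms(1)] assms(4) that by blast
  show "h2_closure (h2_closure A) \<subseteq> h2_closure A"
    by (rule h2_closure_idem[OF assms(1)])
qed

lemma poly_op_eq_sum:
  "degree p \<le> N \<Longrightarrow> poly_op p T f k = (\<Sum>i\<le>N. coeff p i * (T ^^ i) f k)"
  unfolding poly_op_def by (rule sum.mono_neutral_left) (auto simp: coeff_eq_0)

lemma poly_op_0: "poly_op 0 T f = (\<lambda>_. 0)"
  by (simp add: poly_op_def)

lemma poly_op_1: "poly_op 1 T f = f"
  by (simp add: poly_op_def)

lemma poly_op_add: "sadd (poly_op p T f) (poly_op q T f) = poly_op (p + q) T f"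
proof
  fix k
  let ?N = "max (degree p) (degree q)"
  have "poly_op p T f k = (\<Sum>i\<le>?N. coeff p i * (T ^^ i) f k)"
    and "poly_op q T f k = (\<Sum>i\<le>?N. coeff q i * (T ^^ i) f k)"
    by (rule poly_op_eq_sum, simp)+
  moreover have "poly_op (p + q) T f k = (\<Sum>i\<le>?N. coeff (p + q) i * (T ^^ i) f k)"
    by (rule poly_op_eq_sum) (rule degree_add_le_max)
  ultimately show "sadd (poly_op p T f) (poly_op q T f) k = poly_op (p + q) T f k"
    by (simp add: sadd_def sum.distrib distrib_right)
qed

lemma poly_op_smult: "sscale c (poly_op p T f) = poly_op (smult c p) T f"
proof
  fix k
  have "poly_op (smult c p) T f k = (\<Sum>i\<le>degree p. coeff (smult c p) i * (T ^^ i) f k)"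
    by (rule poly_op_eq_sum) (rule degree_smult_le)
  then show "sscale c (poly_op p T f) k = poly_op (smult c p) T f k"
    by (simp add: sscale_def poly_op_def sum_distrib_left mult.assoc)
qed

lemma poly_op_pCons_0: "poly_op (pCons 0 p) T f = poly_op p T (T f)"
proof
  fix k
  have "poly_op (pCons 0 p) T f k = (\<Sum>i\<le>Suc (degree p). coeff (pCons 0 p) i * (T ^^ i) f k)"
    by (rule poly_op_eq_sum) (rule degree_pCons_le)
  also have "\<dots> = (\<Sum>i\<le>degree p. coeff p i * (T ^^ Suc i) f k)"
    unfolding sum.atMost_Suc_shift by simp
  also have "\<dots> = poly_op p T (T f) k"
    by (simp add: poly_op_def funpow_Suc_right del: funpow.simps)
  finally show "poly_op (pCons 0 p) T f k = poly_op p T (T f) k" .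
qed

lemma poly_op_funpow: "poly_op p T ((T ^^ n) f) = poly_op (monom 1 n * p) T f"
proof (induction n arbitrary: f)
  case 0
  then show ?case
    by (simp add: monom_eq_1)
next
  case (Suc n)
  have "monom 1 (Suc n) * p = pCons 0 (monom 1 n * p)"
    by (simp add: monom_Suc)
  then show ?case
    using Suc[of "T f"] by (simp add: poly_op_pCons_0 funpow_Suc_right del: funpow.simps)
qed

lemma H2_poly_op: "bounded_op T \<Longrightarrow> f \<in> H2 \<Longrightarrow> poly_op p T f \<in> H2"
  unfolding poly_op_def by (intro H2_lincomb H2_funpow)

lemma bounded_op_poly_op_commute:
  assumes "bounded_op T" and "f \<in> H2"
  shows "T (poly_op p T f) = poly_op p T (T f)"
  using bounded_op_lincomb[OF assms(1) H2_funpow[OF assms]]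
  by (simp add: poly_op_def funpow_swap1)

lemma closed_subspace_cyclic_subspace:
  assumes "bounded_op T" and "f \<in> H2"
  shows "closed_subspace (cyclic_subspace T f)"
  unfolding cyclic_subspace_def
proof (rule closed_subspace_h2_closure)
  show "{poly_op p T f | p. True} \<subseteq> H2"
    using H2_poly_op[OF assms] by blast
  show "(\<lambda>_. 0) \<in> {poly_op p T f | p. True}"
    using poly_op_0[of T f, symmetric] by blast
  show "\<forall>a\<in>{poly_op p T f | p. True}. \<forall>b\<in>{poly_op p T f | p. True}.
          sadd a b \<in> {poly_op p T f | p. True}"
    using poly_op_add[of _ T f] by blast
  show "\<forall>a\<in>{poly_op p T f | p. True}. \<forall>c. sscale c a \<in> {poly_op p T f | p. True}"
    using poly_op_smult[of _ _ T f] by blast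
qed

lemma bounded_op_image_cyclic_subspace:
  assumes "bounded_op T" and "f \<in> H2"
  shows "T ` cyclic_subspace T f \<subseteq> cyclic_subspace T f"
  unfolding cyclic_subspace_def
proof (rule bounded_op_image_h2_closure[OF assms(1)])
  show "{poly_op p T f | p. True} \<subseteq> H2"
    using H2_poly_op[OF assms] by blast
  have "T (poly_op p T f) = poly_op (pCons 0 p) T f" for p
    by (simp add: bounded_op_poly_op_commute[OF assms] poly_op_pCons_0)
  then show "T ` {poly_op p T f | p. True} \<subseteq> {poly_op p T f | p. True}"
    by auto
qed

lemma mem_cyclic_subspace_self:
  assumes "f \<in> H2"
  shows "f \<in> cyclic_subspace T f"
proof -
  have "f \<in> h2_closure {f}"
    using h2_closure_superset[of "{f}"] assms by blast
  also have "h2_closure {f} \<subseteq> cyclic_subspace T f"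
    unfolding cyclic_subspace_def using poly_op_1[of T f, symmetric] by (intro h2_closure_mono) blast
  finally show ?thesis .
qed

lemma cyclic_subspace_funpow_subset: "cyclic_subspace T ((T ^^ n) f) \<subseteq> cyclic_subspace T f"
  unfolding cyclic_subspace_def by (rule h2_closure_mono) (auto simp: poly_op_funpow)

lemma cyclic_subspace_cong:
  "(\<And>i. (T ^^ i) f = (U ^^ i) f) \<Longrightarrow> cyclic_subspace T f = cyclic_subspace U f"
  by (simp add: cyclic_subspace_def poly_op_def)

lemma funpow_eq_on_invariant:
  assumes "\<And>a. a \<in> A \<Longrightarrow> U a \<in> A" and "\<And>a. a \<in> A \<Longrightarrow> T a = U a" and "a \<in> A"
  shows "(T ^^ i) a = (U ^^ i) a"
  using assms(3)
  by (induction i arbitrary: a) (simp_all add: assms(1,2) funpow_Suc_right del: funpow.simps)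

lemma left_invertible_inj_on: "left_invertible T \<Longrightarrow> inj_on T H2"
  unfolding left_invertible_def by (metis inj_on_inverseI)

lemma n_perturbation_zpowH2:
  assumes "n_perturbation n F" and "a \<in> zpowH2 m"
  shows "op_add Mz F a \<in> zpowH2 (Suc m)"
proof -
  have "F a \<in> H2"
    using assms by (auto simp: n_perturbation_def zpowH2_def bounded_op_H2)
  moreover have "F a \<in> zpow_poly (Suc m)"
    using assms by (auto simp: n_perturbation_def)
  moreover have "Mz a \<in> zpowH2 (Suc m)"
    using assms(2) by (rule Mz_zpowH2)
  ultimately show ?thesis
    by (auto simp: op_add_def zpowH2_def zpow_poly_def H2_sadd) (simp add: sadd_def)
qed

lemma n_perturbation_eq_Mz:
  assumes "n_perturbation n F" and "a \<in> zpowH2 n"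
  shows "op_add Mz F a = Mz a"
proof -
  have "F a = (\<lambda>_. 0)"
    using assms by (intro bounded_op_eq_0_on_zpowH2[of F n]) (auto simp: n_perturbation_def)
  then show ?thesis
    by (simp add: op_add_def sadd_def)
qed

lemma funpow_n_perturbation_zpowH2:
  assumes "n_perturbation n F" and "f \<in> H2"
  shows "(op_add Mz F ^^ j) f \<in> zpowH2 j"
proof (induction j)
  case 0
  then show ?case
    using assms(2) by (simp add: zpowH2_def)
next
  case (Suc j)
  then show ?case
    using n_perturbation_zpowH2[OF assms(1)] by simp
qed

lemma funpow_n_perturbation_neq_0:
  assumes "n_perturbation n F" and "f \<in> H2" and "f \<noteq> (\<lambda>_. 0)"
  shows "(op_add Mz F ^^ j) f \<noteq> (\<lambda>_. 0)"
proof (induction j)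
  case 0
  then show ?case
    using assms(3) by simp
next
  case (Suc j)
  let ?S = "op_add Mz F"
  have "inj_on ?S H2"
    using assms(1) by (intro left_invertible_inj_on) (simp add: n_perturbation_def)
  moreover have "?S (\<lambda>_. 0) = (\<lambda>_. 0)"
    using assms(1) bounded_op_zero[OF bounded_op_Mz]
    by (simp add: n_perturbation_def op_add_def sadd_def bounded_op_zero)
  moreover have "(?S ^^ j) f \<in> H2"
    using funpow_n_perturbation_zpowH2[OF assms(1,2)] by (simp add: zpowH2_def)
  ultimately have "(?S ^^ j) f = (\<lambda>_. 0)" if "?S ((?S ^^ j) f) = (\<lambda>_. 0)"
    using that H2_zero by (metis inj_onD)
  then show ?case
    using Suc by auto
qed

theorem lemma2p4:
  fixes n :: nat and F :: op and f :: seq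
  assumes "n \<ge> 1"
    and "n_perturbation n F"
    and "f \<in> H2" and "f \<noteq> (\<lambda>_. 0)"
  shows "\<exists>M. closed_subspace M \<and> Mz ` M \<subseteq> M \<and> M \<noteq> {\<lambda>_. 0} \<and>
             M \<subseteq> cyclic_subspace (op_add Mz F) f"
proof -
  define S where "S = op_add Mz F"
  define g where "g = (S ^^ n) f"
  have "g \<in> zpowH2 n" and "g \<noteq> (\<lambda>_. 0)"
    using funpow_n_perturbation_zpowH2 funpow_n_perturbation_neq_0 assms(2-4)
    unfolding g_def S_def by blast+
  then have "g \<in> H2"
    by (simp add: zpowH2_def)
  have "Mz a \<in> zpowH2 n" if "a \<in> zpowH2 n" for a
    using Mz_zpowH2[OF that] zpowH2_Suc_subset by blast
  then have "(Mz ^^ i) g = (S ^^ i) g" for i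
    using n_perturbation_eq_Mz[OF assms(2)] \<open>g \<in> zpowH2 n\<close>
    unfolding S_def by (intro funpow_eq_on_invariant[of "zpowH2 n"]) auto
  then have "cyclic_subspace Mz g = cyclic_subspace S g"
    by (rule cyclic_subspace_cong)
  also have "\<dots> \<subseteq> cyclic_subspace S f"
    unfolding g_def by (rule cyclic_subspace_funpow_subset)
  finally have "cyclic_subspace Mz g \<subseteq> cyclic_subspace S f" .
  moreover have "g \<in> cyclic_subspace Mz g"
    using \<open>g \<in> H2\<close> by (rule mem_cyclic_subspace_self)
  ultimately show ?thesis
    using closed_subspace_cyclic_subspace[OF bounded_op_Mz \<open>g \<in> H2\<close>]
      bounded_op_image_cyclic_subspace[OF bounded_op_Mz \<open>g \<in> H2\<close>] \<open>g \<noteq> (\<lambda>_. 0)\<close>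
    unfolding S_def by blast
qed

end
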